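(* Let $T$ be a reduced linear trellis of length $n$, let $\boldsymbol{\alpha}^1,\dots,\boldsymbol{\alpha}^r\in\mathbb{F}^n$ and let $(a_1,l_1),\dots,(a_r,l_r)$ be spans with $0\le l_i\le n$. Then $T\simeq\bigotimes_{i=1}^r\boldsymbol{\alpha}^i|(a_i,l_i)$ if and only if there exist $\mathbf{v}^1,\dots,\mathbf{v}^r\in\prod_iV_i(T)$ such that $\{(\mathbf{v}^i,\boldsymbol{\alpha}^i)\}_{i=1,\dots,r}$ is a product basis of $T$ and each cycle $(\mathbf{v}^i,\boldsymbol{\alpha}^i)$ has minimum span $(a_i,l_i)$.
   Context: Let $\mathbb{F}$ be a finite field and $n\ge1$; indices are taken in $\mathbb{Z}_n$. A trellis $T$ of length $n$ over $\mathbb{F}$ consists of pairwise disjoint finite vertex sets $V_i(T)$, $i\in\mathbb{Z}_n$, and edge sets $E_i(T)\subseteq V_i(T)\times\mathbb{F}\times V_{i+1}(T)$; $(v,\alpha,w)\in E_i(T)$ is an edge from $v$ to $w$ with label $\alpha$ at time index $i$. Every trellis is assumed trim (each vertex has an outgoing and an incoming edge). $T$ is linear if every $V_i(T)$ is an $\mathbb{F}$-vector space and every $E_i(T)$ a subspace. A cycle is a closed path $v_0\alpha_0v_1\cdots\alpha_{n-1}v_n$, $v_n=v_0\in V_0(T)$, of length $n$, identified with $(\mathbf{v},\boldsymbol{\alpha})\in\prod_{i}V_i(T)\times\mathbb{F}^n$; $\mathbb{S}(T)$ is the set of cycles. $T$ is reduced if every edge lies on some cycle. Isomorphisms: for trellises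 of the same length, an isomorphism $f:T\to T'$ is a family of bijections $f_i:V_i(T)\to V_i(T')$ with $(v,\alpha,w)\in E_i(T)\iff(f_i(v),\alpha,f_{i+1}(w))\in E_i(T')$; if $T,T'$ are linear and all $f_i$ linear, $f$ is a linear isomorphism, written $T\simeq T'$. Spans: for $a\in\mathbb{Z}_n$, $0\le l\le n-1$, $[a,a+l]=\{a,\dots,a+l\}\subseteq\mathbb{Z}_n$, $(a,a+l]=[a,a+l]\setminus\{a\}$; the pair $(a,l)$ is a span; degenerate spans are $\emptyset$ (length $-1$) and $\mathbb{Z}_n$ (length $n$, written $(a,n)$). Partial order: $(a_1,l_1)\le(a_2,l_2)$ iff ($l_1\le l_2<n-1$ and $[a_1,a_1+l_1]\subseteq[a_2,a_2+l_2]$) or ($l_2=n-1$ and $(a_1,a_1+l_1]\subseteq(a_2,a_2+l_2]$) or $l_1=-1$ or $l_2=n$. A vector $\boldsymbol{\alpha}\in\mathbb{F}^n$ has span $(a,l)$ ($0\le l\le n-1$) if its support lies in $[a,a+l]$; $\mathbb{Z}_n$ is a span of every vector. A nondegenerate $(a,l)$ is a span of a cycle $(\mathbf{v},\boldsymbol{\alpha})$ if $\{i:v_i\ne0\}\subseteq(a,a+l]$ and $\{i:\alpha_i\ne0\}\subseteq[a,a+l]$; $\emptyset$ is a span only of the zero cycle, $\mathbb{Z}_n$ of every cycle. The minimum span of a cycle is a span of it that is $\le$ every other span of it (when it exists). $\mathbb{S}_{\mathfrak{s}}(T)$ is the subspace of cycles having span $\mathfrak{s}$. A product basis of $T$ is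 a basis $\mathcal{B}$ of $\mathbb{S}(T)$ such that $\mathcal{B}\cap\mathbb{S}_{\mathfrak{s}}(T)$ spans $\mathbb{S}_{\mathfrak{s}}(T)$ for every span $\mathfrak{s}$. Elementary trellises and products: for $\boldsymbol{\alpha}\in\mathbb{F}^n$ with span $(a,l)$, $0\le l\le n$, the elementary trellis $\boldsymbol{\alpha}|(a,l)$ has $V_i=\mathbb{F}$ for $i\in(a,a+l]$ (for $l=n$ this is all of $\mathbb{Z}_n$), $V_i=0$ otherwise, and $E_i=\langle(u_i,\alpha_i,u_{i+1})\rangle$ where $u_i=1$ if $i\in(a,a+l]$ and $u_i=0$ otherwise. The product $T\otimes T'$ has $V_i=V_i(T)\times V_i(T')$ and $E_i=\{((v,v'),\alpha+\alpha',(w,w')):(v,\alpha,w)\in E_i(T),(v',\alpha',w')\in E_i(T')\}$. Convention: in a product of elementary trellises at most one factor has span $(a,0)$ for each $a\in\mathbb{Z}_n$. *)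

theory Defs
  imports Complex_Main "HOL-Library.Function_Algebras"
begin

text \<open>Indices of Z_n are represented by naturals i < n; successor is Suc i mod n.
  Vectors / vertex sequences are functions on nat that vanish at indices \<ge> n.\<close>

definition halfopen :: "nat \<Rightarrow> nat \<Rightarrow> nat \<Rightarrow> nat set" where
  "halfopen n a l = {(a + k) mod n | k. 1 \<le> k \<and> k \<le> l}"

definition closedint :: "nat \<Rightarrow> nat \<Rightarrow> nat \<Rightarrow> nat set" where
  "closedint n a l = {(a + k) mod n | k. k \<le> l}"

definition is_trellis ::
  "nat \<Rightarrow> (nat \<Rightarrow> 'v set) \<Rightarrow> (nat \<Rightarrow> ('v \<times> 'f \<times> 'v) set) \<Rightarrow> bool" where
  "is_trellis n V E \<longleftrightarrow> (\<forall>i<n. finite (V i)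
     \<and> E i \<subseteq> {(v, \<alpha>, w). v \<in> V i \<and> w \<in> V (Suc i mod n)}
     \<and> (\<forall>v\<in>V i. \<exists>\<alpha> w. (v, \<alpha>, w) \<in> E i)
     \<and> (\<forall>w\<in>V (Suc i mod n). \<exists>v \<alpha>. (v, \<alpha>, w) \<in> E i))"

definition is_linear_trellis ::
  "('f::field \<Rightarrow> 'v::ab_group_add \<Rightarrow> 'v) \<Rightarrow> nat \<Rightarrow> (nat \<Rightarrow> 'v set)
     \<Rightarrow> (nat \<Rightarrow> ('v \<times> 'f \<times> 'v) set) \<Rightarrow> bool" where
  "is_linear_trellis scale n V E \<longleftrightarrow> is_trellis n V E \<and> (\<forall>i<n.
     0 \<in> V i \<and> (\<forall>x\<in>V i. \<forall>y\<in>V i. x + y \<in> V i) \<and> (\<forall>c. \<forall>x\<in>V i. scale c x \<in> V i)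
     \<and> (0, 0, 0) \<in> E i
     \<and> (\<forall>v \<alpha> w v' \<alpha>' w'. (v, \<alpha>, w) \<in> E i \<longrightarrow> (v', \<alpha>', w') \<in> E i
           \<longrightarrow> (v + v', \<alpha> + \<alpha>', w + w') \<in> E i)
     \<and> (\<forall>c v \<alpha> w. (v, \<alpha>, w) \<in> E i \<longrightarrow> (scale c v, c * \<alpha>, scale c w) \<in> E i))"

definition cycles ::
  "nat \<Rightarrow> (nat \<Rightarrow> ('v::zero \<times> 'f::zero \<times> 'v) set) \<Rightarrow> ((nat \<Rightarrow> 'v) \<times> (nat \<Rightarrow> 'f)) set" where
  "cycles n E = {(v, \<alpha>). (\<forall>i<n. (v i, \<alpha> i, v (Suc i mod n)) \<in> E i)
                       \<and> (\<forall>i. n \<le> i \<longrightarrow> v i = 0 \<and> \<alpha> i = 0)}"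

definition is_reduced ::
  "nat \<Rightarrow> (nat \<Rightarrow> 'v set) \<Rightarrow> (nat \<Rightarrow> ('v::zero \<times> 'f::zero \<times> 'v) set) \<Rightarrow> bool" where
  "is_reduced n V E \<longleftrightarrow> (\<forall>i<n. \<forall>e\<in>E i. \<exists>v \<alpha>. (v, \<alpha>) \<in> cycles n E
        \<and> (v i, \<alpha> i, v (Suc i mod n)) = e)"

definition lin_iso ::
  "('f::field \<Rightarrow> 'v::ab_group_add \<Rightarrow> 'v) \<Rightarrow> nat \<Rightarrow> (nat \<Rightarrow> 'v set) \<Rightarrow> (nat \<Rightarrow> ('v \<times> 'f \<times> 'v) set)
   \<Rightarrow> ('f \<Rightarrow> 'w::ab_group_add \<Rightarrow> 'w) \<Rightarrow> (nat \<Rightarrow> 'w set) \<Rightarrow> (nat \<Rightarrow> ('w \<times> 'f \<times> 'w) set) \<Rightarrow> bool" where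
  "lin_iso scale n V E scale' V' E' \<longleftrightarrow> (\<exists>f :: nat \<Rightarrow> 'v \<Rightarrow> 'w. \<forall>i<n.
      bij_betw (f i) (V i) (V' i)
      \<and> (\<forall>x\<in>V i. \<forall>y\<in>V i. f i (x + y) = f i x + f i y)
      \<and> (\<forall>c. \<forall>x\<in>V i. f i (scale c x) = scale' c (f i x))
      \<and> (\<forall>v\<in>V i. \<forall>\<alpha>. \<forall>w\<in>V (Suc i mod n).
            (v, \<alpha>, w) \<in> E i \<longleftrightarrow> (f i v, \<alpha>, f (Suc i mod n) w) \<in> E' i))"

text \<open>Elementary trellis alpha|(a,l), 0 \<le> l \<le> n (l = n means the full span Z_n).\<close>
definition elem_u :: "nat \<Rightarrow> nat \<Rightarrow> nat \<Rightarrow> nat \<Rightarrow> 'f::field" where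
  "elem_u n a l i = (if i \<in> halfopen n a l then 1 else 0)"

definition elemV :: "nat \<Rightarrow> nat \<Rightarrow> nat \<Rightarrow> nat \<Rightarrow> 'f::field set" where
  "elemV n a l i = (if i \<in> halfopen n a l then UNIV else {0})"

definition elemE :: "nat \<Rightarrow> (nat \<Rightarrow> 'f::field) \<Rightarrow> nat \<Rightarrow> nat \<Rightarrow> nat \<Rightarrow> ('f \<times> 'f \<times> 'f) set" where
  "elemE n \<alpha> a l i = {(c * elem_u n a l i, c * \<alpha> i, c * elem_u n a l (Suc i mod n)) | c. True}"

text \<open>The product of r trellises (indexed by j < r); a vertex is the tuple j \<mapsto> v_j.\<close>
definition prodV :: "nat \<Rightarrow> (nat \<Rightarrow> nat \<Rightarrow> 'w::zero set) \<Rightarrow> nat \<Rightarrow> (nat \<Rightarrow> 'w) set" where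
  "prodV r Vs i = {v. (\<forall>j<r. v j \<in> Vs j i) \<and> (\<forall>j. r \<le> j \<longrightarrow> v j = 0)}"

definition prodE :: "nat \<Rightarrow> (nat \<Rightarrow> nat \<Rightarrow> ('w::zero \<times> 'f::comm_monoid_add \<times> 'w) set)
     \<Rightarrow> nat \<Rightarrow> ((nat \<Rightarrow> 'w) \<times> 'f \<times> (nat \<Rightarrow> 'w)) set" where
  "prodE r Es i = {(v, \<Sum>j<r. \<alpha> j, w) | v \<alpha> w. (\<forall>j<r. (v j, \<alpha> j, w j) \<in> Es j i)
                      \<and> (\<forall>j. r \<le> j \<longrightarrow> v j = 0 \<and> w j = 0)}"

text \<open>Spans: the empty span, the full span Z_n, and nondegenerate spans (a,l), a < n, l \<le> n-1.\<close>
datatype span = EmptySp | FullSp | Sp nat nat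

definition mkspan :: "nat \<Rightarrow> nat \<Rightarrow> nat \<Rightarrow> span" where
  "mkspan n a l = (if l = n then FullSp else Sp a l)"

fun span_le :: "nat \<Rightarrow> span \<Rightarrow> span \<Rightarrow> bool" where
  "span_le n EmptySp s = True"
| "span_le n s FullSp = True"
| "span_le n FullSp s = False"
| "span_le n (Sp a l) EmptySp = False"
| "span_le n (Sp a1 l1) (Sp a2 l2) =
     ((l1 \<le> l2 \<and> l2 < n - 1 \<and> closedint n a1 l1 \<subseteq> closedint n a2 l2)
      \<or> (l2 = n - 1 \<and> halfopen n a1 l1 \<subseteq> halfopen n a2 l2))"

fun cyc_has_span :: "nat \<Rightarrow> span \<Rightarrow> (nat \<Rightarrow> 'v::zero) \<times> (nat \<Rightarrow> 'f::zero) \<Rightarrow> bool" where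
  "cyc_has_span n EmptySp c = (fst c = (\<lambda>_. 0) \<and> snd c = (\<lambda>_. 0))"
| "cyc_has_span n FullSp c = True"
| "cyc_has_span n (Sp a l) c = (a < n \<and> l < n
     \<and> (\<forall>i<n. fst c i \<noteq> 0 \<longrightarrow> i \<in> halfopen n a l)
     \<and> (\<forall>i<n. snd c i \<noteq> 0 \<longrightarrow> i \<in> closedint n a l))"

definition is_min_span :: "nat \<Rightarrow> (nat \<Rightarrow> 'v::zero) \<times> (nat \<Rightarrow> 'f::zero) \<Rightarrow> span \<Rightarrow> bool" where
  "is_min_span n c s \<longleftrightarrow> cyc_has_span n s c \<and> (\<forall>s'. cyc_has_span n s' c \<longrightarrow> span_le n s s')"

definition lincomb :: "('f::field \<Rightarrow> 'v::ab_group_add \<Rightarrow> 'v) \<Rightarrow> nat set \<Rightarrow> (nat \<Rightarrow> 'f)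
    \<Rightarrow> (nat \<Rightarrow> (nat \<Rightarrow> 'v) \<times> (nat \<Rightarrow> 'f)) \<Rightarrow> (nat \<Rightarrow> 'v) \<times> (nat \<Rightarrow> 'f)" where
  "lincomb scale J c b = ((\<lambda>i. \<Sum>j\<in>J. scale (c j) (fst (b j) i)), (\<lambda>i. \<Sum>j\<in>J. c j * snd (b j) i))"

definition product_basis :: "('f::field \<Rightarrow> 'v::ab_group_add \<Rightarrow> 'v) \<Rightarrow> nat
    \<Rightarrow> (nat \<Rightarrow> ('v \<times> 'f \<times> 'v) set) \<Rightarrow> nat \<Rightarrow> (nat \<Rightarrow> (nat \<Rightarrow> 'v) \<times> (nat \<Rightarrow> 'f)) \<Rightarrow> bool" where
  "product_basis scale n E r b \<longleftrightarrow>
     (\<forall>j<r. b j \<in> cycles n E)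
   \<and> (\<forall>c. lincomb scale {..<r} c b = ((\<lambda>_. 0), (\<lambda>_. 0)) \<longrightarrow> (\<forall>j<r. c j = 0))
   \<and> (\<forall>x\<in>cycles n E. \<exists>c. x = lincomb scale {..<r} c b)
   \<and> (\<forall>s. \<forall>x\<in>cycles n E. cyc_has_span n s x \<longrightarrow>
        (\<exists>c. x = lincomb scale {j. j < r \<and> cyc_has_span n s (b j)} c b))"

end

(*
  The cycles of the factors of a product of elementary trellises form a product basis of the
  product, each cycle having the minimum span of its factor, and a linear isomorphism carries
  cycles, linear combinations and spans over; this gives one direction.

  Conversely, let (v^j, alpha^j) be a product basis of the reduced trellis T with the prescribed
  minimum spans. Every vertex at time i lies on a cycle, hence is the vertex at time i of some
  combination sum_j c_j (v^j, alpha^j). The coefficients c_j of the factors whose vertex interval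
  contains i are determined by that vertex: the difference of two combinations with the same vertex
  at time i has span (i, n - 1), which none of these factors has, so by the product basis property
  their coefficients in the difference vanish. Mapping the vertex to the family whose j-th entry is
  c_j if i lies in (a_j, a_j + l_j] and 0 otherwise is the isomorphism onto the product.
*)

theory Submission
  imports Defs "HOL-Number_Theory.Cong"
begin

section \<open>Intervals of \<open>\<int>\<^sub>n\<close>\<close>

lemma mod_add_left_cancel_nat: "(a + k) mod n = (a + k') mod n \<Longrightarrow> k mod n = k' mod (n::nat)"
  using cong_add_lcancel_nat unfolding cong_def by blast

lemma mod_add_left_cancel_less:
  "(a + k) mod n = (a + k') mod (n::nat) \<Longrightarrow> k < n \<Longrightarrow> k' < n \<Longrightarrow> k = k'"
  using mod_add_left_cancel_nat[of a k n k'] by simp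

lemma halfopen_less: "i \<in> halfopen n a l \<Longrightarrow> 0 < n \<Longrightarrow> i < n"
  by (auto simp: halfopen_def)

lemma closedint_less: "i \<in> closedint n a l \<Longrightarrow> 0 < n \<Longrightarrow> i < n"
  by (auto simp: closedint_def)

lemma halfopen_subset_closedint: "halfopen n a l \<subseteq> closedint n a l"
  by (auto simp: halfopen_def closedint_def)

lemma halfopen_0 [simp]: "halfopen n a 0 = {}"
  by (auto simp: halfopen_def)

lemma closedint_0: "a < n \<Longrightarrow> closedint n a 0 = {a}"
  by (auto simp: closedint_def)

lemma halfopen_first: "1 \<le> l \<Longrightarrow> (a + 1) mod n \<in> halfopen n a l"
  by (auto simp: halfopen_def intro!: exI[of _ 1])

lemma halfopen_mono: "l \<le> l' \<Longrightarrow> halfopen n a l \<subseteq> halfopen n a l'"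
  by (auto simp: halfopen_def)

lemma closedint_imp_halfopen_or_Suc:
  assumes "1 \<le> l" "i \<in> closedint n a l"
  shows "i \<in> halfopen n a l \<or> Suc i mod n \<in> halfopen n a l"
proof -
  obtain k where k: "k \<le> l" "i = (a + k) mod n"
    using assms(2) by (auto simp: closedint_def)
  show ?thesis
  proof (cases "k = 0")
    case True
    then have "Suc i mod n = (a + 1) mod n" using k by (simp add: mod_Suc_eq)
    then show ?thesis using halfopen_first[OF assms(1)] by simp
  next
    case False
    then show ?thesis using k by (auto simp: halfopen_def)
  qed
qed

lemma Suc_halfopen_imp_closedint:
  assumes "Suc i mod n \<in> halfopen n a l" "i < n"
  shows "i \<in> closedint n a l"
proof -
  obtain k where k: "1 \<le> k" "k \<le> l" "Suc i mod n = (a + k) mod n"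
    using assms(1) by (auto simp: halfopen_def)
  then have "(1 + i) mod n = (1 + (a + (k - 1))) mod n" by simp
  then have "i mod n = (a + (k - 1)) mod n" by (rule mod_add_left_cancel_nat)
  then have "i = (a + (k - 1)) mod n" using assms(2) by simp
  then show ?thesis using k unfolding closedint_def by (intro CollectI exI[of _ "k - 1"]) simp
qed

lemma start_notin_halfopen: "l < n \<Longrightarrow> a < n \<Longrightarrow> a \<notin> halfopen n a l"
proof
  assume "l < n" "a < n" "a \<in> halfopen n a l"
  then obtain k where k: "1 \<le> k" "k \<le> l" "(a + 0) mod n = (a + k) mod n"
    by (auto simp: halfopen_def)
  then have "0 = k" using mod_add_left_cancel_less[of a 0 n k] \<open>l < n\<close> by simp
  then show False using k by simp
qed

lemma circle_offset: "i < n \<Longrightarrow> i' < (n::nat) \<Longrightarrow> (i + (i' + n - i) mod n) mod n = i'"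
  by (simp add: mod_add_right_eq)

lemma halfopen_whole_circle:
  assumes "i < n" "i' < n" "i' \<noteq> i"
  shows "i' \<in> halfopen n i (n - 1)"
proof -
  define k where "k = (i' + n - i) mod n"
  have e: "(i + k) mod n = i'" using circle_offset assms k_def by simp
  moreover have "k \<noteq> 0"
  proof
    assume "k = 0"
    then show False using e assms by simp
  qed
  moreover have "k < n" using assms k_def by simp
  ultimately show ?thesis unfolding halfopen_def by (auto intro!: exI[of _ k])
qed

lemma closedint_whole_circle:
  assumes "i < n" "i' < n"
  shows "i' \<in> closedint n i (n - 1)"
proof -
  define k where "k = (i' + n - i) mod n"
  have "(i + k) mod n = i'" "k < n" using circle_offset assms k_def by auto
  then show ?thesis unfolding closedint_def by (auto intro!: exI[of _ k])
qed

lemma halfopen_full: "a < n \<Longrightarrow> i < n \<Longrightarrow> i \<in> halfopen n a n"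
proof (cases "i = a")
  case True
  then show "a < n \<Longrightarrow> i < n \<Longrightarrow> i \<in> halfopen n a n"
    unfolding halfopen_def by (auto intro!: exI[of _ n])
next
  case False
  then show "a < n \<Longrightarrow> i < n \<Longrightarrow> i \<in> halfopen n a n"
    using halfopen_whole_circle halfopen_mono[of "n - 1" n n a] by auto
qed

lemma card_closedint: "l < n \<Longrightarrow> card (closedint n a l) = Suc l"
proof -
  assume "l < n"
  have "inj_on (\<lambda>k. (a + k) mod n) {..l}"
  proof (rule inj_onI)
    fix x y assume "x \<in> {..l}" "y \<in> {..l}" "(a + x) mod n = (a + y) mod n"
    then show "x = y" using mod_add_left_cancel_less[of a x n y] \<open>l < n\<close> by simp
  qed
  moreover have "closedint n a l = (\<lambda>k. (a + k) mod n) ` {..l}"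
    unfolding closedint_def by auto
  ultimately show ?thesis by (simp add: card_image)
qed

lemma closedint_subset_imp_le:
  assumes "l < n" "l' < n" "closedint n a l \<subseteq> closedint n a' l'"
  shows "l \<le> l'"
proof -
  have "finite (closedint n a' l')"
    unfolding closedint_def by simp
  then have "card (closedint n a l) \<le> card (closedint n a' l')"
    using assms(3) by (rule card_mono)
  then show ?thesis using assms by (simp add: card_closedint)
qed

lemma closedint_subset_of_halfopen_subset:
  assumes "1 \<le> l" "0 < n" "\<forall>i<n. i \<in> halfopen n a l \<longrightarrow> i \<in> halfopen n a' l'"
    and i: "i \<in> closedint n a l"
  shows "i \<in> closedint n a' l'"
proof -
  have "i < n" using closedint_less i assms(2) by blast
  show ?thesis
  proof (cases "i \<in> halfopen n a l")
    case True
    then show ?thesis using assms(3) \<open>i < n\<close> halfopen_subset_closedint by blast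
  next
    case False
    then have "Suc i mod n \<in> halfopen n a l" using closedint_imp_halfopen_or_Suc assms(1) i by blast
    then have "Suc i mod n \<in> halfopen n a' l'" using assms(2,3) by simp
    then show ?thesis using Suc_halfopen_imp_closedint \<open>i < n\<close> by blast
  qed
qed

section \<open>Linear combinations of cycles and product bases\<close>

lemma sum_apply: "(\<Sum>j\<in>J. f j) x = (\<Sum>j\<in>J. f j x)"
  by (induct J rule: infinite_finite_induct) auto

lemma snd_lincomb: "snd (lincomb sc J c b) i = (\<Sum>j\<in>J. c j * snd (b j) i)"
  by (simp add: lincomb_def)

lemma lincomb_cong:
  "(\<And>j. j \<in> J \<Longrightarrow> c j = c' j) \<Longrightarrow> (\<And>j. j \<in> J \<Longrightarrow> b j = b' j) \<Longrightarrow> lincomb sc J c b = lincomb sc J c' b'"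
  unfolding lincomb_def by (simp cong: sum.cong)

lemma lincomb_mono_neutral:
  assumes "finite K" "J \<subseteq> K" "\<forall>j\<in>K - J. c j = 0" "\<forall>v. sc 0 v = 0"
  shows "lincomb sc K c b = lincomb sc J c b"
proof -
  have "(\<Sum>j\<in>K. sc (c j) (fst (b j) i)) = (\<Sum>j\<in>J. sc (c j) (fst (b j) i))" for i
    by (rule sum.mono_neutral_right) (use assms in auto)
  moreover have "(\<Sum>j\<in>K. c j * snd (b j) i) = (\<Sum>j\<in>J. c j * snd (b j) i)" for i
    by (rule sum.mono_neutral_right) (use assms in auto)
  ultimately show ?thesis by (simp add: lincomb_def)
qed

lemma cycle_beyond: "x \<in> cycles n E \<Longrightarrow> n \<le> i \<Longrightarrow> fst x i = 0 \<and> snd x i = 0"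
  by (auto simp: cycles_def case_prod_beta)

lemma product_basisI:
  assumes "\<And>j. j < r \<Longrightarrow> b j \<in> cycles n E"
    and "\<And>c j. lincomb sc {..<r} c b = ((\<lambda>_. 0), (\<lambda>_. 0)) \<Longrightarrow> j < r \<Longrightarrow> c j = 0"
    and "\<And>x. x \<in> cycles n E \<Longrightarrow> \<exists>c. x = lincomb sc {..<r} c b"
    and "\<And>s x. x \<in> cycles n E \<Longrightarrow> cyc_has_span n s x
           \<Longrightarrow> \<exists>c. x = lincomb sc {j. j < r \<and> cyc_has_span n s (b j)} c b"
  shows "product_basis sc n E r b"
  unfolding product_basis_def using assms by blast

lemma
  assumes "product_basis sc n E r b"
  shows product_basis_cycles: "j < r \<Longrightarrow> b j \<in> cycles n E"
    and product_basis_independent: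
      "lincomb sc {..<r} c b = ((\<lambda>_. 0), (\<lambda>_. 0)) \<Longrightarrow> j < r \<Longrightarrow> c j = 0"
    and product_basis_generates: "x \<in> cycles n E \<Longrightarrow> \<exists>c. x = lincomb sc {..<r} c b"
    and product_basis_span: "x \<in> cycles n E \<Longrightarrow> cyc_has_span n s x
           \<Longrightarrow> \<exists>c. x = lincomb sc {j. j < r \<and> cyc_has_span n s (b j)} c b"
  using assms unfolding product_basis_def by blast+

context vector_space
begin

lemma lincomb_diff:
  "lincomb scale J (\<lambda>j. c j - c' j) b
     = ((\<lambda>i. fst (lincomb scale J c b) i - fst (lincomb scale J c' b) i),
        (\<lambda>i. snd (lincomb scale J c b) i - snd (lincomb scale J c' b) i))"
  unfolding lincomb_def by (simp add: scale_left_diff_distrib left_diff_distrib sum_subtractf)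

lemma fst_lincomb_add:
  "fst (lincomb scale J (\<lambda>j. c j + c' j) b) i = fst (lincomb scale J c b) i + fst (lincomb scale J c' b) i"
  unfolding lincomb_def by (simp add: scale_left_distrib sum.distrib)

lemma fst_lincomb_mult:
  "fst (lincomb scale J (\<lambda>j. d * c j) b) i = scale d (fst (lincomb scale J c b) i)"
  unfolding lincomb_def by (simp add: scale_sum_right)

end

section \<open>Linear trellises\<close>

locale linear_trellis = vector_space scale
  for scale :: "'f::field \<Rightarrow> 'v::ab_group_add \<Rightarrow> 'v" +
  fixes n :: nat and V :: "nat \<Rightarrow> 'v set" and E :: "nat \<Rightarrow> ('v \<times> 'f \<times> 'v) set"
  assumes linear_trellis: "is_linear_trellis scale n V E"
begin

lemma zero_vertex: "i < n \<Longrightarrow> 0 \<in> V i"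
  using linear_trellis unfolding is_linear_trellis_def by blast

lemma add_vertex: "i < n \<Longrightarrow> x \<in> V i \<Longrightarrow> y \<in> V i \<Longrightarrow> x + y \<in> V i"
  using linear_trellis unfolding is_linear_trellis_def by blast

lemma scale_vertex: "i < n \<Longrightarrow> x \<in> V i \<Longrightarrow> scale c x \<in> V i"
  using linear_trellis unfolding is_linear_trellis_def by blast

lemma zero_edge: "i < n \<Longrightarrow> (0, 0, 0) \<in> E i"
  using linear_trellis unfolding is_linear_trellis_def by blast

lemma add_edge:
  "i < n \<Longrightarrow> (v, \<beta>, w) \<in> E i \<Longrightarrow> (v', \<beta>', w') \<in> E i \<Longrightarrow> (v + v', \<beta> + \<beta>', w + w') \<in> E i"
  using linear_trellis unfolding is_linear_trellis_def by blast

lemma scale_edge: "i < n \<Longrightarrow> (v, \<beta>, w) \<in> E i \<Longrightarrow> (scale c v, c * \<beta>, scale c w) \<in> E i"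
  using linear_trellis unfolding is_linear_trellis_def by blast

lemma edge_vertices: "i < n \<Longrightarrow> (v, \<beta>, w) \<in> E i \<Longrightarrow> v \<in> V i \<and> w \<in> V (Suc i mod n)"
  using linear_trellis unfolding is_linear_trellis_def is_trellis_def by blast

lemma outgoing_edge: "i < n \<Longrightarrow> v \<in> V i \<Longrightarrow> \<exists>\<beta> w. (v, \<beta>, w) \<in> E i"
  using linear_trellis unfolding is_linear_trellis_def is_trellis_def by blast

lemma sum_edge:
  assumes "i < n"
  shows "finite J \<Longrightarrow> (\<forall>j\<in>J. (p j, q j, s j) \<in> E i) \<Longrightarrow> (sum p J, sum q J, sum s J) \<in> E i"
  by (induct J rule: finite_induct) (auto intro: add_edge zero_edge assms)

lemma lincomb_in_cycles:
  assumes J: "finite J" "\<forall>j\<in>J. b j \<in> cycles n E"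
  shows "lincomb scale J c b \<in> cycles n E"
proof -
  have "(\<Sum>j\<in>J. scale (c j) (fst (b j) i), \<Sum>j\<in>J. c j * snd (b j) i,
          \<Sum>j\<in>J. scale (c j) (fst (b j) (Suc i mod n))) \<in> E i" if i: "i < n" for i
  proof (rule sum_edge[OF i J(1)], intro ballI scale_edge[OF i])
    fix j assume "j \<in> J"
    then show "(fst (b j) i, snd (b j) i, fst (b j) (Suc i mod n)) \<in> E i"
      using J(2) i unfolding cycles_def by (auto simp: case_prod_beta)
  qed
  moreover have "(\<Sum>j\<in>J. scale (c j) (fst (b j) i)) = 0 \<and> (\<Sum>j\<in>J. c j * snd (b j) i) = 0"
    if "n \<le> i" for i
    using J(2) that unfolding cycles_def by (auto intro!: sum.neutral)
  ultimately show ?thesis unfolding cycles_def lincomb_def by simp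
qed

lemma cycle_vertex: "x \<in> cycles n E \<Longrightarrow> i < n \<Longrightarrow> fst x i \<in> V i"
  using edge_vertices[of i "fst x i" "snd x i" "fst x (Suc i mod n)"]
  unfolding cycles_def by (auto simp: case_prod_beta)

end

section \<open>Transport along a linear isomorphism\<close>

locale linear_trellis_iso = linear_trellis scale n V E + target: vector_space scale'
  for scale :: "'f::field \<Rightarrow> 'v::ab_group_add \<Rightarrow> 'v" and n V E
    and scale' :: "'f \<Rightarrow> 'w::ab_group_add \<Rightarrow> 'w" +
  fixes V' :: "nat \<Rightarrow> 'w set" and E' :: "nat \<Rightarrow> ('w \<times> 'f \<times> 'w) set"
    and f :: "nat \<Rightarrow> 'v \<Rightarrow> 'w"
  assumes target_edge_vertices:
      "\<And>i. i < n \<Longrightarrow> E' i \<subseteq> {(v, \<beta>, w). v \<in> V' i \<and> w \<in> V' (Suc i mod n)}"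
    and f_bij: "\<And>i. i < n \<Longrightarrow> bij_betw (f i) (V i) (V' i)"
    and f_add: "\<And>i x y. i < n \<Longrightarrow> x \<in> V i \<Longrightarrow> y \<in> V i \<Longrightarrow> f i (x + y) = f i x + f i y"
    and f_scale: "\<And>i c x. i < n \<Longrightarrow> x \<in> V i \<Longrightarrow> f i (scale c x) = scale' c (f i x)"
    and f_edge_iff: "\<And>i v \<beta> w. i < n \<Longrightarrow> v \<in> V i \<Longrightarrow> w \<in> V (Suc i mod n)
       \<Longrightarrow> (v, \<beta>, w) \<in> E i \<longleftrightarrow> (f i v, \<beta>, f (Suc i mod n) w) \<in> E' i"
begin

lemma f_zero: "i < n \<Longrightarrow> f i 0 = 0"
  using f_add[of i 0 0] zero_vertex by simp

lemma f_eq_zero_iff: "i < n \<Longrightarrow> x \<in> V i \<Longrightarrow> f i x = 0 \<longleftrightarrow> x = 0"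
  using f_zero zero_vertex bij_betw_imp_inj_on[OF f_bij] by (metis inj_onD)

lemma f_sum:
  assumes i: "i < n"
  shows "finite A \<Longrightarrow> (\<forall>x\<in>A. h x \<in> V i) \<Longrightarrow> f i (sum h A) = (\<Sum>x\<in>A. f i (h x)) \<and> sum h A \<in> V i"
proof (induct A rule: finite_induct)
  case empty
  then show ?case using f_zero zero_vertex i by simp
next
  case (insert x F)
  then show ?case using f_add[OF i] add_vertex[OF i] by simp
qed

lemma f_inv_into: "i < n \<Longrightarrow> y \<in> V' i \<Longrightarrow> f i (inv_into (V i) (f i) y) = y \<and> inv_into (V i) (f i) y \<in> V i"
  using f_bij[of i] by (simp add: bij_betw_def f_inv_into_f inv_into_into)

definition map_cycle :: "(nat \<Rightarrow> 'v) \<times> (nat \<Rightarrow> 'f) \<Rightarrow> (nat \<Rightarrow> 'w) \<times> (nat \<Rightarrow> 'f)" where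
  "map_cycle x = ((\<lambda>i. if i < n then f i (fst x i) else 0), snd x)"

definition pull_cycle :: "(nat \<Rightarrow> 'w) \<times> (nat \<Rightarrow> 'f) \<Rightarrow> (nat \<Rightarrow> 'v) \<times> (nat \<Rightarrow> 'f)" where
  "pull_cycle y = ((\<lambda>i. if i < n then inv_into (V i) (f i) (fst y i) else 0), snd y)"

lemma map_cycle_zero: "map_cycle ((\<lambda>_. 0), (\<lambda>_. 0)) = ((\<lambda>_. 0), (\<lambda>_. 0))"
  unfolding map_cycle_def by (simp add: f_zero fun_eq_iff)

lemma map_cycle_in_cycles:
  assumes x: "x \<in> cycles n E"
  shows "map_cycle x \<in> cycles n E'"
proof -
  have "(f i (fst x i), snd x i, f (Suc i mod n) (fst x (Suc i mod n))) \<in> E' i" if i: "i < n" for i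
  proof -
    have e: "(fst x i, snd x i, fst x (Suc i mod n)) \<in> E i"
      using x i by (auto simp: cycles_def)
    then show ?thesis using f_edge_iff[OF i] edge_vertices[OF i e] by blast
  qed
  then show ?thesis using x unfolding map_cycle_def cycles_def by auto
qed

lemma pull_cycle:
  assumes y: "y \<in> cycles n E'"
  shows "pull_cycle y \<in> cycles n E" "map_cycle (pull_cycle y) = y"
proof -
  let ?g = "\<lambda>i. inv_into (V i) (f i) (fst y i)"
  have edge: "(fst y i, snd y i, fst y (Suc i mod n)) \<in> E' i" if "i < n" for i
    using y that by (auto simp: cycles_def)
  have g: "f i (?g i) = fst y i \<and> ?g i \<in> V i" if "i < n" for i
    using edge[OF that] target_edge_vertices[OF that] f_inv_into[OF that] by blast
  have beyond: "fst y i = 0 \<and> snd y i = 0" if "n \<le> i" for i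
    using y that by (auto simp: cycles_def)
  have "(?g i, snd y i, ?g (Suc i mod n)) \<in> E i" if i: "i < n" for i
  proof -
    have "Suc i mod n < n" using i by simp
    then show ?thesis using f_edge_iff[OF i] g edge i by auto
  qed
  then show "pull_cycle y \<in> cycles n E"
    using beyond unfolding pull_cycle_def cycles_def by auto
  show "map_cycle (pull_cycle y) = y"
    unfolding map_cycle_def pull_cycle_def using g beyond by (auto simp: prod_eq_iff fun_eq_iff)
qed

lemma map_cycle_inj:
  assumes x: "x \<in> cycles n E" and x': "x' \<in> cycles n E" and eq: "map_cycle x = map_cycle x'"
  shows "x = x'"
proof -
  have "fst x i = fst x' i" for i
  proof (cases "i < n")
    case True
    have "fst (map_cycle x) i = fst (map_cycle x') i" using eq by simp
    then have "f i (fst x i) = f i (fst x' i)" using True by (simp add: map_cycle_def)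
    then show ?thesis
      using bij_betw_imp_inj_on[OF f_bij[OF True]] cycle_vertex[OF x True] cycle_vertex[OF x' True]
      by (simp add: inj_on_eq_iff)
  next
    case False
    then show ?thesis using cycle_beyond[OF x] cycle_beyond[OF x'] by simp
  qed
  moreover have "snd x = snd x'" using eq unfolding map_cycle_def by simp
  ultimately show ?thesis by (simp add: prod_eq_iff fun_eq_iff)
qed

lemma map_cycle_lincomb:
  assumes J: "finite J" "\<forall>j\<in>J. b j \<in> cycles n E"
  shows "map_cycle (lincomb scale J c b) = lincomb scale' J c (\<lambda>j. map_cycle (b j))"
proof -
  have "f i (\<Sum>j\<in>J. scale (c j) (fst (b j) i)) = (\<Sum>j\<in>J. scale' (c j) (f i (fst (b j) i)))"
    if i: "i < n" for i
  proof -
    have "\<forall>j\<in>J. scale (c j) (fst (b j) i) \<in> V i"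
      using J(2) cycle_vertex i scale_vertex by blast
    then have "f i (\<Sum>j\<in>J. scale (c j) (fst (b j) i)) = (\<Sum>j\<in>J. f i (scale (c j) (fst (b j) i)))"
      using f_sum[OF i J(1), of "\<lambda>j. scale (c j) (fst (b j) i)"] by blast
    also have "\<dots> = (\<Sum>j\<in>J. scale' (c j) (f i (fst (b j) i)))"
      using J(2) cycle_vertex i f_scale by (intro sum.cong) auto
    finally show ?thesis .
  qed
  then show ?thesis unfolding map_cycle_def lincomb_def by (auto simp: fun_eq_iff)
qed

lemma cyc_has_span_map_cycle:
  assumes x: "x \<in> cycles n E"
  shows "cyc_has_span n s (map_cycle x) = cyc_has_span n s x"
proof -
  have nz: "fst (map_cycle x) i = 0 \<longleftrightarrow> fst x i = 0" for i
  proof (cases "i < n")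
    case True
    then show ?thesis using f_eq_zero_iff cycle_vertex[OF x] by (simp add: map_cycle_def)
  next
    case False
    then show ?thesis using cycle_beyond[OF x] by (simp add: map_cycle_def)
  qed
  then have "fst (map_cycle x) = (\<lambda>_. 0) \<longleftrightarrow> fst x = (\<lambda>_. 0)"
    by (auto simp: fun_eq_iff)
  moreover have sn: "snd (map_cycle x) = snd x"
    by (simp add: map_cycle_def)
  ultimately show ?thesis
    by (cases s) (simp_all only: cyc_has_span.simps nz)
qed

lemma is_min_span_pull_cycle:
  assumes y: "y \<in> cycles n E'"
  shows "is_min_span n (pull_cycle y) s \<longleftrightarrow> is_min_span n y s"
proof -
  have "cyc_has_span n s' (pull_cycle y) = cyc_has_span n s' y" for s'
    using cyc_has_span_map_cycle[OF pull_cycle(1)[OF y], of s'] pull_cycle(2)[OF y] by simp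
  then show ?thesis by (simp add: is_min_span_def)
qed

lemma product_basis_pull_cycle:
  assumes pb: "product_basis scale' n E' r b'"
  shows "product_basis scale n E r (\<lambda>j. pull_cycle (b' j))"
proof -
  let ?b = "\<lambda>j. pull_cycle (b' j)"
  have b_cyc: "?b j \<in> cycles n E" and map_b: "map_cycle (?b j) = b' j" if "j < r" for j
    using pull_cycle product_basis_cycles[OF pb that] by auto
  have lincomb_cyc: "lincomb scale J c ?b \<in> cycles n E"
    and map_lincomb: "map_cycle (lincomb scale J c ?b) = lincomb scale' J c b'"
    if "J \<subseteq> {..<r}" for J c
  proof -
    have J: "finite J" "\<forall>j\<in>J. ?b j \<in> cycles n E"
      using that b_cyc finite_subset by auto
    then show "lincomb scale J c ?b \<in> cycles n E" by (rule lincomb_in_cycles)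
    show "map_cycle (lincomb scale J c ?b) = lincomb scale' J c b'"
      using map_cycle_lincomb[OF J] that map_b by (auto intro: lincomb_cong)
  qed
  have pull_eq: "x = lincomb scale J c ?b"
    if "x \<in> cycles n E" "map_cycle x = lincomb scale' J c b'" "J \<subseteq> {..<r}" for x J c
    using map_cycle_inj[OF that(1) lincomb_cyc[OF that(3)]] map_lincomb[OF that(3)] that(2) by simp
  show ?thesis
  proof (rule product_basisI)
    fix c j assume "lincomb scale {..<r} c ?b = ((\<lambda>_. 0), (\<lambda>_. 0))" "j < r"
    then show "c j = 0"
      using map_lincomb[of "{..<r}" c] map_cycle_zero product_basis_independent[OF pb] by simp
  next
    fix x assume x: "x \<in> cycles n E"
    obtain c where "map_cycle x = lincomb scale' {..<r} c b'"
      using product_basis_generates[OF pb map_cycle_in_cycles[OF x]] by blast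
    then show "\<exists>c. x = lincomb scale {..<r} c ?b" using pull_eq[OF x] by blast
  next
    fix s x assume x: "x \<in> cycles n E" and sx: "cyc_has_span n s x"
    have "cyc_has_span n s (?b j) = cyc_has_span n s (b' j)" if "j < r" for j
      using cyc_has_span_map_cycle[OF b_cyc[OF that], of s] map_b[OF that] by simp
    then have J: "{j. j < r \<and> cyc_has_span n s (?b j)} = {j. j < r \<and> cyc_has_span n s (b' j)}"
      by auto
    have "cyc_has_span n s (map_cycle x)"
      using cyc_has_span_map_cycle[OF x] sx by simp
    then obtain c where "map_cycle x = lincomb scale' {j. j < r \<and> cyc_has_span n s (b' j)} c b'"
      using product_basis_span[OF pb map_cycle_in_cycles[OF x]] by blast
    then have "x = lincomb scale {j. j < r \<and> cyc_has_span n s (b' j)} c ?b"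
      by (rule pull_eq[OF x]) auto
    then show "\<exists>c. x = lincomb scale {j. j < r \<and> cyc_has_span n s (?b j)} c ?b"
      unfolding J by blast
  qed (rule b_cyc)
qed

end

lemma lin_iso_imp_linear_trellis_iso:
  assumes "lin_iso scale n V E scale' V' E'" "linear_trellis scale n V E" "vector_space scale'"
    and "\<And>i. i < n \<Longrightarrow> E' i \<subseteq> {(v, \<beta>, w). v \<in> V' i \<and> w \<in> V' (Suc i mod n)}"
  shows "\<exists>f. linear_trellis_iso scale n V E scale' V' E' f"
  using assms(1) unfolding lin_iso_def
proof (elim exE)
  fix f
  assume "\<forall>i<n. bij_betw (f i) (V i) (V' i)
      \<and> (\<forall>x\<in>V i. \<forall>y\<in>V i. f i (x + y) = f i x + f i y)
      \<and> (\<forall>c. \<forall>x\<in>V i. f i (scale c x) = scale' c (f i x))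
      \<and> (\<forall>v\<in>V i. \<forall>\<beta>. \<forall>w\<in>V (Suc i mod n).
            (v, \<beta>, w) \<in> E i \<longleftrightarrow> (f i v, \<beta>, f (Suc i mod n) w) \<in> E' i)"
  then have "linear_trellis_iso scale n V E scale' V' E' f"
    using assms(2-4) by (intro linear_trellis_iso.intro linear_trellis_iso_axioms.intro) auto
  then show ?thesis by blast
qed

section \<open>Products of elementary trellises\<close>

lemma vector_space_coordinatewise: "vector_space (\<lambda>(c::'f::field) (v::'i \<Rightarrow> 'f) j. c * v j)"
  by unfold_locales (simp_all add: fun_eq_iff algebra_simps)

lemma elemE_vertex_constant:
  assumes n: "0 < n" and edges: "\<forall>i<n. (x i, g i, x (Suc i mod n)) \<in> elemE n \<alpha> a l i"
    and i: "i \<in> halfopen n a l"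
  shows "x i = x ((a + 1) mod n)"
proof -
  have "x ((a + k) mod n) = x ((a + 1) mod n)" if "1 \<le> k" "k \<le> l" for k
    using that
  proof (induct k)
    case (Suc k)
    show ?case
    proof (cases "k = 0")
      case False
      define p where "p = (a + k) mod n"
      have p: "p < n" "p \<in> halfopen n a l" "Suc p mod n = (a + Suc k) mod n"
        using n False Suc.prems unfolding p_def halfopen_def by (auto simp: mod_Suc_eq)
      moreover have "Suc p mod n \<in> halfopen n a l"
        using Suc.prems p(3) unfolding halfopen_def by (auto intro!: exI[of _ "Suc k"])
      moreover obtain d where "x p = d * elem_u n a l p" "x (Suc p mod n) = d * elem_u n a l (Suc p mod n)"
        using edges p(1) unfolding elemE_def by blast
      ultimately show ?thesis
        using Suc False by (simp add: elem_u_def p_def)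
    qed simp
  qed simp
  then show ?thesis using i unfolding halfopen_def by auto
qed

lemma elemE_cycle_multiple:
  fixes x g \<alpha> :: "nat \<Rightarrow> 'f::field"
  assumes a: "a < n"
    and support: "\<forall>i<n. \<alpha> i \<noteq> 0 \<longrightarrow> i \<in> closedint n a l"
    and nonzero: "l = 0 \<longrightarrow> \<alpha> a \<noteq> 0"
    and edges: "\<forall>i<n. (x i, g i, x (Suc i mod n)) \<in> elemE n \<alpha> a l i"
  shows "\<exists>c. \<forall>i<n. x i = c * elem_u n a l i \<and> g i = c * \<alpha> i"
proof (cases "l = 0")
  case True
  have "x i = (g a / \<alpha> a) * elem_u n a l i \<and> g i = (g a / \<alpha> a) * \<alpha> i" if i: "i < n" for i
  proof -
    obtain d where d: "x i = d * elem_u n a l i" "g i = d * \<alpha> i"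
      using edges i unfolding elemE_def by blast
    show ?thesis
    proof (cases "i = a")
      case False
      then have "\<alpha> i = 0" using support i closedint_0[OF a] True by auto
      then show ?thesis using d True by (simp add: elem_u_def)
    qed (use d nonzero True in \<open>simp add: elem_u_def\<close>)
  qed
  then show ?thesis by blast
next
  case False
  define c where "c = x ((a + 1) mod n)"
  have n: "0 < n" using a by simp
  have "x i = c * elem_u n a l i \<and> g i = c * \<alpha> i" if i: "i < n" for i
  proof -
    obtain d where d: "x i = d * elem_u n a l i" "g i = d * \<alpha> i"
        "x (Suc i mod n) = d * elem_u n a l (Suc i mod n)"
      using edges i unfolding elemE_def by blast
    have const: "x i' = c" if "i' \<in> halfopen n a l" for i'
      using elemE_vertex_constant[OF n edges that] by (simp add: c_def)
    consider "i \<in> halfopen n a l" | "i \<notin> halfopen n a l" "Suc i mod n \<in> halfopen n a l"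
      | "i \<notin> halfopen n a l" "Suc i mod n \<notin> halfopen n a l" by blast
    then show ?thesis
    proof cases
      case 3
      then have "\<alpha> i = 0"
        using closedint_imp_halfopen_or_Suc[of l i n a] False support i by auto
      then show ?thesis using d 3 by (simp add: elem_u_def)
    qed (use d const in \<open>simp_all add: elem_u_def\<close>)
  qed
  then show ?thesis by blast
qed

locale elementary_product =
  fixes n r :: nat and \<alpha> :: "nat \<Rightarrow> nat \<Rightarrow> 'f::field" and a l :: "nat \<Rightarrow> nat"
  assumes n_pos: "0 < n"
    and span_bounds: "\<And>j. j < r \<Longrightarrow> a j < n \<and> l j \<le> n"
    and alpha_beyond: "\<And>j i. j < r \<Longrightarrow> n \<le> i \<Longrightarrow> \<alpha> j i = 0"
    and alpha_support: "\<And>j i. j < r \<Longrightarrow> i < n \<Longrightarrow> \<alpha> j i \<noteq> 0 \<Longrightarrow> i \<in> closedint n (a j) (l j)"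
    and short_spans_distinct:
      "\<And>j k. j < r \<Longrightarrow> k < r \<Longrightarrow> l j = 0 \<Longrightarrow> l k = 0 \<Longrightarrow> a j = a k \<Longrightarrow> j = k"
    and alpha_nonzero: "\<And>j. j < r \<Longrightarrow> l j = 0 \<Longrightarrow> \<alpha> j \<noteq> (\<lambda>_. 0)"
begin

abbreviation u :: "nat \<Rightarrow> nat \<Rightarrow> 'f" where "u j i \<equiv> elem_u n (a j) (l j) i"
abbreviation "PV \<equiv> prodV r (\<lambda>j. elemV n (a j) (l j))"
abbreviation "PE \<equiv> prodE r (\<lambda>j. elemE n (\<alpha> j) (a j) (l j))"
abbreviation prod_scale :: "'f \<Rightarrow> (nat \<Rightarrow> 'f) \<Rightarrow> nat \<Rightarrow> 'f" where
  "prod_scale \<equiv> \<lambda>c v j. c * v j"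

definition factor_vertex :: "nat \<Rightarrow> nat \<Rightarrow> nat \<Rightarrow> 'f" where
  "factor_vertex j i = (\<lambda>k. if k = j then u j i else 0)"

abbreviation "factor_cycle j \<equiv> (factor_vertex j, \<alpha> j)"

lemma u_eq: "u j i = (if i \<in> halfopen n (a j) (l j) then 1 else 0)"
  by (simp add: elem_u_def)

lemma u_beyond: "n \<le> i \<Longrightarrow> u j i = 0"
  using halfopen_less n_pos by (fastforce simp: elem_u_def)

lemma alpha_short_span:
  assumes j: "j < r" "l j = 0"
  shows "\<alpha> j (a j) \<noteq> 0" "i \<noteq> a j \<Longrightarrow> \<alpha> j i = 0"
proof -
  have vanish: "\<alpha> j i = 0" if "i \<noteq> a j" for i
  proof (rule ccontr)
    assume nz: "\<alpha> j i \<noteq> 0"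
    then have "i < n" using alpha_beyond j by (meson not_le)
    then have "i \<in> closedint n (a j) 0" using alpha_support[OF j(1) _ nz] j(2) by simp
    then show False using closedint_0 span_bounds j that by auto
  qed
  then show "i \<noteq> a j \<Longrightarrow> \<alpha> j i = 0" .
  obtain i where "\<alpha> j i \<noteq> 0" using alpha_nonzero j by auto
  then show "\<alpha> j (a j) \<noteq> 0" using vanish by (cases "i = a j") auto
qed

lemma fst_lincomb_factor_cycles:
  "finite J \<Longrightarrow> fst (lincomb prod_scale J c factor_cycle) i k = (if k \<in> J then c k * u k i else 0)"
  by (simp add: lincomb_def sum_apply factor_vertex_def if_distrib cong: if_cong)

lemma factor_vertex_beyond: "n \<le> i \<Longrightarrow> factor_vertex j i = 0"
  using u_beyond by (auto simp: factor_vertex_def)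

lemma factor_vertex_nonzero_iff: "factor_vertex j i \<noteq> 0 \<longleftrightarrow> i \<in> halfopen n (a j) (l j)"
  by (auto simp: factor_vertex_def u_eq fun_eq_iff)

lemma factor_cycle_edge:
  assumes j: "j < r"
  shows "(factor_vertex j i, \<alpha> j i, factor_vertex j (Suc i mod n)) \<in> PE i"
proof -
  define g where "g = (\<lambda>k. if k = j then \<alpha> j i else 0)"
  have edges: "(factor_vertex j i k, g k, factor_vertex j (Suc i mod n) k) \<in> elemE n (\<alpha> k) (a k) (l k) i"
    for k
    by (cases "k = j") (auto simp: elemE_def factor_vertex_def g_def intro: exI[of _ 1] exI[of _ 0])
  have sum: "(\<Sum>k<r. g k) = \<alpha> j i" using j by (simp add: g_def)
  have beyond: "factor_vertex j i k = 0 \<and> factor_vertex j (Suc i mod n) k = 0" if "r \<le> k" for k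
    using j that by (auto simp: factor_vertex_def)
  show ?thesis
    unfolding prodE_def mem_Collect_eq
    by (rule exI[of _ "factor_vertex j i"], rule exI[of _ g],
        rule exI[of _ "factor_vertex j (Suc i mod n)"]) (use edges sum beyond in auto)
qed

lemma factor_cycle_in_cycles: "j < r \<Longrightarrow> factor_cycle j \<in> cycles n PE"
  unfolding cycles_def using factor_cycle_edge factor_vertex_beyond alpha_beyond by auto

lemma prodE_edgeD:
  "(v, \<beta>, w) \<in> PE i \<Longrightarrow> \<exists>\<gamma>. (\<forall>k<r. (v k, \<gamma> k, w k) \<in> elemE n (\<alpha> k) (a k) (l k) i)
     \<and> \<beta> = (\<Sum>k<r. \<gamma> k) \<and> (\<forall>k. r \<le> k \<longrightarrow> v k = 0 \<and> w k = 0)"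
  unfolding prodE_def by auto

lemma prodE_vertices: "(v, \<beta>, w) \<in> PE i \<Longrightarrow> v \<in> PV i \<and> w \<in> PV (Suc i mod n)"
  unfolding prodE_def prodV_def elemE_def elemV_def elem_u_def by auto

lemma prod_cycle_lincomb:
  assumes y: "y \<in> cycles n PE"
  shows "\<exists>c. y = lincomb prod_scale {..<r} c factor_cycle"
proof -
  obtain w \<beta> where y_eq: "y = (w, \<beta>)" by (cases y)
  have "\<forall>i\<in>{..<n}. \<exists>\<gamma>. (\<forall>k<r. (w i k, \<gamma> k, w (Suc i mod n) k) \<in> elemE n (\<alpha> k) (a k) (l k) i)
      \<and> \<beta> i = (\<Sum>k<r. \<gamma> k) \<and> (\<forall>k. r \<le> k \<longrightarrow> w i k = 0 \<and> w (Suc i mod n) k = 0)"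
  proof (intro ballI prodE_edgeD)
    fix i assume "i \<in> {..<n}"
    then show "(w i, \<beta> i, w (Suc i mod n)) \<in> PE i" using y unfolding y_eq cycles_def by auto
  qed
  then obtain G where G: "\<forall>i\<in>{..<n}. (\<forall>k<r. (w i k, G i k, w (Suc i mod n) k) \<in> elemE n (\<alpha> k) (a k) (l k) i)
      \<and> \<beta> i = (\<Sum>k<r. G i k) \<and> (\<forall>k. r \<le> k \<longrightarrow> w i k = 0 \<and> w (Suc i mod n) k = 0)"
    by (rule bchoice[elim_format]) blast
  have "\<forall>k\<in>{..<r}. \<exists>c. \<forall>i<n. w i k = c * u k i \<and> G i k = c * \<alpha> k i"
  proof
    fix k assume "k \<in> {..<r}"
    then show "\<exists>c. \<forall>i<n. w i k = c * u k i \<and> G i k = c * \<alpha> k i"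
      using G span_bounds alpha_support alpha_short_span(1)
      by (intro elemE_cycle_multiple[where x = "\<lambda>i. w i k" and g = "\<lambda>i. G i k"]) auto
  qed
  then obtain C where C: "\<forall>k\<in>{..<r}. \<forall>i<n. w i k = C k * u k i \<and> G i k = C k * \<alpha> k i"
    by (rule bchoice[elim_format]) blast
  have "w i k = fst (lincomb prod_scale {..<r} C factor_cycle) i k" for i k
    using C G y u_beyond cycle_beyond[OF y] unfolding y_eq
    by (cases "i < n"; cases "k < r") (auto simp: fst_lincomb_factor_cycles)
  moreover have "\<beta> i = snd (lincomb prod_scale {..<r} C factor_cycle) i" for i
    using C G cycle_beyond[OF y] alpha_beyond unfolding y_eq
    by (cases "i < n") (auto simp: snd_lincomb intro!: sum.cong)
  ultimately show ?thesis unfolding y_eq by (auto simp: prod_eq_iff fun_eq_iff)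
qed

lemma snd_lincomb_at_short_span:
  assumes j: "j < r" "l j = 0"
    and others: "\<And>k. k < r \<Longrightarrow> k \<noteq> j \<Longrightarrow> 1 \<le> l k \<Longrightarrow> c k * \<alpha> k (a j) = 0"
  shows "snd (lincomb prod_scale {..<r} c factor_cycle) (a j) = c j * \<alpha> j (a j)"
proof -
  have "c k * \<alpha> k (a j) = 0" if "k \<in> {..<r}" "k \<noteq> j" for k
  proof (cases "l k = 0")
    case True
    then have "a j \<noteq> a k" using short_spans_distinct j that by auto
    then show ?thesis using alpha_short_span(2) that True by auto
  qed (use others that in auto)
  then have "(\<Sum>k\<in>{..<r} - {j}. c k * \<alpha> k (a j)) = 0"
    by (intro sum.neutral) auto
  then show ?thesis using j by (simp add: snd_lincomb sum.remove)
qed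

lemma factor_cycles_independent:
  assumes zero: "lincomb prod_scale {..<r} c factor_cycle = ((\<lambda>_. 0), (\<lambda>_. 0))" and j: "j < r"
  shows "c j = 0"
proof -
  have long: "c k = 0" if "k < r" "1 \<le> l k" for k
    using fst_lincomb_factor_cycles[of "{..<r}" c "(a k + 1) mod n" k] halfopen_first[OF that(2)]
      zero that(1)
    by (simp add: u_eq)
  show ?thesis
  proof (cases "l j = 0")
    case True
    then have "c j * \<alpha> j (a j) = 0"
      using snd_lincomb_at_short_span[OF j True, of c] long zero by simp
    then show ?thesis using alpha_short_span(1)[OF j True] by simp
  qed (use long j in simp)
qed

text \<open>A label at the point of a span of length 0 is seen either in the combination itself or,
  when it cancels there, inside the span of some longer factor.\<close>
lemma short_span_point_in_span:
  assumes j: "j < r" "l j = 0" "c j \<noteq> 0"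
    and labels: "\<forall>i<n. snd (lincomb prod_scale {..<r} c factor_cycle) i \<noteq> 0 \<longrightarrow> i \<in> closedint n a' l'"
    and long: "\<And>k i. k < r \<Longrightarrow> c k \<noteq> 0 \<Longrightarrow> 1 \<le> l k \<Longrightarrow> i \<in> closedint n (a k) (l k)
                 \<Longrightarrow> i \<in> closedint n a' l'"
  shows "a j \<in> closedint n a' l'"
proof (cases "\<exists>k<r. k \<noteq> j \<and> c k \<noteq> 0 \<and> 1 \<le> l k \<and> \<alpha> k (a j) \<noteq> 0")
  case True
  then obtain k where k: "k < r" "c k \<noteq> 0" "1 \<le> l k" "\<alpha> k (a j) \<noteq> 0" by blast
  then have "a j \<in> closedint n (a k) (l k)" using alpha_support span_bounds j(1) by blast
  then show ?thesis using long k by blast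
next
  case False
  then have "snd (lincomb prod_scale {..<r} c factor_cycle) (a j) = c j * \<alpha> j (a j)"
    using snd_lincomb_at_short_span[OF j(1,2)] by auto
  then show ?thesis using labels j alpha_short_span(1) span_bounds by auto
qed

lemma lincomb_span_imp_factor_span:
  assumes sp: "cyc_has_span n s (lincomb prod_scale {..<r} c factor_cycle)" and j: "j < r"
    and cj: "c j \<noteq> 0"
  shows "cyc_has_span n s (factor_cycle j)"
proof (cases s)
  case EmptySp
  then show ?thesis using sp factor_cycles_independent j cj by (auto simp: prod_eq_iff)
next
  case FullSp
  then show ?thesis by simp
next
  case (Sp a' l')
  let ?y = "lincomb prod_scale {..<r} c factor_cycle"
  have bounds: "a' < n" "l' < n" using sp Sp by auto
  have halfopen_sub: "i \<in> halfopen n a' l'"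
    if "k < r" "c k \<noteq> 0" "i < n" "i \<in> halfopen n (a k) (l k)" for k i
  proof -
    have "fst ?y i k = c k" using that by (simp add: fst_lincomb_factor_cycles u_eq)
    then have "fst ?y i \<noteq> 0" using that(2) by auto
    then show ?thesis using sp Sp that(3) by auto
  qed
  have closedint_sub: "i \<in> closedint n a' l'"
    if "k < r" "c k \<noteq> 0" "1 \<le> l k" "i \<in> closedint n (a k) (l k)" for k i
    using closedint_subset_of_halfopen_subset[OF that(3) n_pos _ that(4)] halfopen_sub[OF that(1,2)]
    by blast
  have "i \<in> closedint n a' l'" if "i < n" "\<alpha> j i \<noteq> 0" for i
  proof (cases "l j = 0")
    case True
    have "a j \<in> closedint n a' l'"
      by (rule short_span_point_in_span[where c = c, OF j True cj]) (use sp Sp closedint_sub in auto)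
    then show ?thesis using alpha_short_span(2)[OF j True] that(2) by metis
  qed (use alpha_support[OF j that] closedint_sub[OF j cj] in simp)
  moreover have "i \<in> halfopen n a' l'" if "i < n" "factor_vertex j i \<noteq> 0" for i
    using halfopen_sub[OF j cj that(1)] that(2) factor_vertex_nonzero_iff by blast
  ultimately show ?thesis using Sp bounds by auto
qed

lemma factor_cycle_has_mkspan:
  assumes j: "j < r"
  shows "cyc_has_span n (mkspan n (a j) (l j)) (factor_cycle j)"
  using span_bounds[OF j] alpha_support[OF j] factor_vertex_nonzero_iff
  by (auto simp: mkspan_def)

lemma factor_cycle_nonzero:
  assumes j: "j < r"
  shows "factor_cycle j \<noteq> ((\<lambda>_. 0), (\<lambda>_. 0))"
proof (cases "l j = 0")
  case True
  then show ?thesis using alpha_nonzero[OF j] by simp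
next
  case False
  then have "factor_vertex j ((a j + 1) mod n) \<noteq> 0"
    using factor_vertex_nonzero_iff halfopen_first by simp
  then show ?thesis by (auto simp: fun_eq_iff)
qed

lemma mkspan_le_factor_span:
  assumes j: "j < r" and hs: "cyc_has_span n s (factor_cycle j)"
  shows "span_le n (mkspan n (a j) (l j)) s"
proof (cases s)
  case EmptySp
  then show ?thesis using hs factor_cycle_nonzero[OF j] by simp
next
  case FullSp
  then show ?thesis by (cases "mkspan n (a j) (l j)") simp_all
next
  case (Sp a' l')
  have bounds: "a' < n" "l' < n" and aj: "a j < n" "l j \<le> n"
    using hs Sp span_bounds j by auto
  have vertices: "i \<in> halfopen n a' l'" if "i < n" "i \<in> halfopen n (a j) (l j)" for i
    using hs Sp that factor_vertex_nonzero_iff by auto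
  have labels: "i \<in> closedint n a' l'" if "i < n" "\<alpha> j i \<noteq> 0" for i
    using hs Sp that by auto
  show ?thesis
  proof (cases "l j = n")
    case True
    then show ?thesis
      using vertices[OF bounds(1)] halfopen_full[OF aj(1) bounds(1)] start_notin_halfopen bounds by auto
  next
    case False
    then have mk: "mkspan n (a j) (l j) = Sp (a j) (l j)" by (simp add: mkspan_def)
    show ?thesis
    proof (cases "l' = n - 1")
      case True
      then show ?thesis using mk Sp vertices halfopen_less n_pos by auto
    next
      case l': False
      have sub: "closedint n (a j) (l j) \<subseteq> closedint n a' l'"
      proof
        fix i assume i: "i \<in> closedint n (a j) (l j)"
        show "i \<in> closedint n a' l'"
        proof (cases "l j = 0")
          case True
          then show ?thesis using i closedint_0 aj labels alpha_short_span(1)[OF j] by auto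
        qed (use closedint_subset_of_halfopen_subset[OF _ n_pos _ i] vertices in auto)
      qed
      then have "l j \<le> l'" using closedint_subset_imp_le[OF _ bounds(2)] aj False by simp
      then show ?thesis using mk Sp l' sub bounds by auto
    qed
  qed
qed

lemma factor_cycle_min_span: "j < r \<Longrightarrow> is_min_span n (factor_cycle j) (mkspan n (a j) (l j))"
  unfolding is_min_span_def using factor_cycle_has_mkspan mkspan_le_factor_span by blast

lemma product_basis_factor_cycles: "product_basis prod_scale n PE r factor_cycle"
proof (rule product_basisI)
  fix s x assume x: "x \<in> cycles n PE" and sx: "cyc_has_span n s x"
  obtain c where c: "x = lincomb prod_scale {..<r} c factor_cycle"
    using prod_cycle_lincomb[OF x] by blast
  let ?J = "{j. j < r \<and> cyc_has_span n s (factor_cycle j)}"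
  have "c j = 0" if "j \<in> {..<r} - ?J" for j
    using lincomb_span_imp_factor_span sx c that by blast
  then have "lincomb prod_scale {..<r} c factor_cycle = lincomb prod_scale ?J c factor_cycle"
    by (intro lincomb_mono_neutral) auto
  then show "\<exists>c. x = lincomb prod_scale ?J c factor_cycle" using c by auto
qed (use factor_cycle_in_cycles factor_cycles_independent prod_cycle_lincomb in auto)

lemma factor_basis_of_lin_iso:
  assumes T: "linear_trellis scale n V E" and iso: "lin_iso scale n V E prod_scale PV PE"
  shows "\<exists>vs. product_basis scale n E r (\<lambda>j. (vs j, \<alpha> j))
           \<and> (\<forall>j<r. is_min_span n (vs j, \<alpha> j) (mkspan n (a j) (l j)))"
proof -
  obtain f where "linear_trellis_iso scale n V E prod_scale PV PE f"
    using lin_iso_imp_linear_trellis_iso[OF iso T vector_space_coordinatewise] prodE_vertices by blast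
  then interpret iso: linear_trellis_iso scale n V E prod_scale PV PE f .
  define vs where "vs j = fst (iso.pull_cycle (factor_cycle j))" for j
  have pull: "iso.pull_cycle (factor_cycle j) = (vs j, \<alpha> j)" for j
    by (simp add: vs_def iso.pull_cycle_def)
  have "product_basis scale n E r (\<lambda>j. (vs j, \<alpha> j))"
    using iso.product_basis_pull_cycle[OF product_basis_factor_cycles] by (simp add: pull)
  moreover have "is_min_span n (vs j, \<alpha> j) (mkspan n (a j) (l j))" if "j < r" for j
    using iso.is_min_span_pull_cycle[OF factor_cycle_in_cycles[OF that]] factor_cycle_min_span[OF that]
    by (simp add: pull)
  ultimately show ?thesis by blast
qed

end

section \<open>From a product basis to an isomorphism\<close>

lemma cyc_has_span_avoiding: "i < n \<Longrightarrow> fst x i = 0 \<Longrightarrow> cyc_has_span n (Sp i (n - 1)) x"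
  using halfopen_whole_circle closedint_whole_circle by fastforce

locale trellis_product_basis = elementary_product n r \<alpha> a l + linear_trellis scale n V E
  for n r :: nat and \<alpha> :: "nat \<Rightarrow> nat \<Rightarrow> 'f::field" and a l :: "nat \<Rightarrow> nat"
    and scale :: "'f \<Rightarrow> 'v::ab_group_add \<Rightarrow> 'v" and V E +
  fixes vs :: "nat \<Rightarrow> nat \<Rightarrow> 'v"
  assumes reduced: "is_reduced n V E"
    and basis: "product_basis scale n E r (\<lambda>j. (vs j, \<alpha> j))"
    and min_span: "\<And>j. j < r \<Longrightarrow> is_min_span n (vs j, \<alpha> j) (mkspan n (a j) (l j))"
begin

abbreviation lc :: "(nat \<Rightarrow> 'f) \<Rightarrow> (nat \<Rightarrow> 'v) \<times> (nat \<Rightarrow> 'f)" where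
  "lc c \<equiv> lincomb scale {..<r} c (\<lambda>j. (vs j, \<alpha> j))"

lemma lc_in_cycles: "lc c \<in> cycles n E"
  using product_basis_cycles[OF basis] by (intro lincomb_in_cycles) auto

lemma lc_coeff_unique: "lc c = lc c' \<Longrightarrow> j < r \<Longrightarrow> c j = c' j"
  using product_basis_independent[OF basis, of "\<lambda>j. c j - c' j" j]
  by (simp add: lincomb_diff prod_eq_iff fun_eq_iff)

lemma lc_coeff_outside_span:
  assumes sx: "cyc_has_span n s (lc c)" and k: "k < r" and not_k: "\<not> cyc_has_span n s (vs k, \<alpha> k)"
  shows "c k = 0"
proof -
  let ?J = "{j. j < r \<and> cyc_has_span n s (vs j, \<alpha> j)}"
  obtain e where e: "lc c = lincomb scale ?J e (\<lambda>j. (vs j, \<alpha> j))"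
    using product_basis_span[OF basis lc_in_cycles sx] by blast
  define e' where "e' j = (if j \<in> ?J then e j else 0)" for j
  have "lc e' = lincomb scale ?J e' (\<lambda>j. (vs j, \<alpha> j))"
    by (rule lincomb_mono_neutral) (auto simp: e'_def)
  also have "\<dots> = lc c"
    unfolding e by (rule lincomb_cong) (simp_all add: e'_def)
  finally show ?thesis
    using lc_coeff_unique[of c e' k] k not_k by (simp add: e'_def)
qed

lemma vs_outside_span: "j < r \<Longrightarrow> i < n \<Longrightarrow> i \<notin> halfopen n (a j) (l j) \<Longrightarrow> vs j i = 0"
  using min_span[of j] halfopen_full span_bounds[of j]
  by (cases "l j = n") (auto simp: is_min_span_def mkspan_def)

lemma lc_coeff_eq_of_vertex_eq:
  assumes eq: "fst (lc c) i = fst (lc c') i" and i: "i < n" and k: "k < r"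
    and ik: "i \<in> halfopen n (a k) (l k)"
  shows "c k = c' k"
proof -
  have "fst (lc (\<lambda>j. c j - c' j)) i = 0" using eq by (simp add: lincomb_diff)
  then have sp: "cyc_has_span n (Sp i (n - 1)) (lc (\<lambda>j. c j - c' j))"
    using cyc_has_span_avoiding i by blast
  have "\<not> span_le n (mkspan n (a k) (l k)) (Sp i (n - 1))"
    using ik start_notin_halfopen[of "n - 1" n i] i by (auto simp: mkspan_def)
  then have "\<not> cyc_has_span n (Sp i (n - 1)) (vs k, \<alpha> k)"
    using min_span[OF k] unfolding is_min_span_def by blast
  then show ?thesis using lc_coeff_outside_span[OF sp k] by simp
qed

lemma vertex_lc: "i < n \<Longrightarrow> v \<in> V i \<Longrightarrow> \<exists>c. v = fst (lc c) i"
proof -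
  assume i: "i < n" and v: "v \<in> V i"
  obtain \<beta> w where "(v, \<beta>, w) \<in> E i" using outgoing_edge[OF i v] by blast
  then obtain y where y: "y \<in> cycles n E" "fst y i = v"
    using reduced i unfolding is_reduced_def by fastforce
  then show ?thesis using product_basis_generates[OF basis y(1)] by auto
qed

text \<open>The isomorphism onto the product sends the vertex of \<open>lc c\<close> at time \<open>i\<close> to the vertex of the
  same combination of the factor cycles; the choice of \<open>c\<close> does not matter by
  \<open>lc_coeff_eq_of_vertex_eq\<close>.\<close>
definition vertex_coeffs :: "nat \<Rightarrow> 'v \<Rightarrow> nat \<Rightarrow> 'f" where
  "vertex_coeffs i v = (SOME c. fst (lc c) i = v)"

definition vertex_map :: "nat \<Rightarrow> 'v \<Rightarrow> nat \<Rightarrow> 'f" where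
  "vertex_map i v = (\<lambda>k. if k < r then vertex_coeffs i v k * u k i else 0)"

lemma vertex_map_lc: "i < n \<Longrightarrow> vertex_map i (fst (lc c) i) = (\<lambda>k. if k < r then c k * u k i else 0)"
proof -
  assume i: "i < n"
  have "fst (lc (vertex_coeffs i (fst (lc c) i))) i = fst (lc c) i"
    unfolding vertex_coeffs_def by (rule someI[of _ c]) simp
  then have "vertex_coeffs i (fst (lc c) i) k * u k i = c k * u k i" if "k < r" for k
    using lc_coeff_eq_of_vertex_eq[OF _ i that] by (cases "i \<in> halfopen n (a k) (l k)") (auto simp: u_eq)
  then show ?thesis unfolding vertex_map_def by auto
qed

lemma vertex_map_in_prodV: "i < n \<Longrightarrow> v \<in> V i \<Longrightarrow> vertex_map i v \<in> PV i"
  using vertex_lc[of i v] vertex_map_lc[of i] by (auto simp: prodV_def elemV_def u_eq)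

lemma vertex_map_inj: "i < n \<Longrightarrow> inj_on (vertex_map i) (V i)"
proof (rule inj_onI)
  fix v v' assume i: "i < n" and "v \<in> V i" "v' \<in> V i" and eq: "vertex_map i v = vertex_map i v'"
  obtain c where v: "v = fst (lc c) i" using vertex_lc[OF i \<open>v \<in> V i\<close>] by blast
  obtain c' where v': "v' = fst (lc c') i" using vertex_lc[OF i \<open>v' \<in> V i\<close>] by blast
  have "c k = c' k" if "k < r" "i \<in> halfopen n (a k) (l k)" for k
    using fun_cong[OF eq, of k] that unfolding v v' vertex_map_lc[OF i] by (simp add: u_eq)
  then have "scale (c k) (vs k i) = scale (c' k) (vs k i)" if "k \<in> {..<r}" for k
    using vs_outside_span[of k i] i that by (cases "i \<in> halfopen n (a k) (l k)") auto
  then have "(\<Sum>k<r. scale (c k) (vs k i)) = (\<Sum>k<r. scale (c' k) (vs k i))"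
    by (rule sum.cong[OF refl])
  then show "v = v'" unfolding v v' lincomb_def by simp
qed

lemma vertex_map_surj: "i < n \<Longrightarrow> t \<in> PV i \<Longrightarrow> t \<in> vertex_map i ` V i"
proof -
  assume i: "i < n" and t: "t \<in> PV i"
  have "t k = (if k < r then t k * u k i else 0)" for k
    using t unfolding prodV_def elemV_def u_eq by (cases "k < r") (auto split: if_splits)
  then have "vertex_map i (fst (lc t) i) = t" using vertex_map_lc[OF i] by auto
  then show ?thesis by (rule image_eqI[OF sym cycle_vertex[OF lc_in_cycles i]])
qed

lemma vertex_map_add:
  assumes i: "i < n" and "v \<in> V i" "v' \<in> V i"
  shows "vertex_map i (v + v') = vertex_map i v + vertex_map i v'"
proof -
  obtain c where v: "v = fst (lc c) i" using vertex_lc[OF i \<open>v \<in> V i\<close>] by blast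
  obtain c' where v': "v' = fst (lc c') i" using vertex_lc[OF i \<open>v' \<in> V i\<close>] by blast
  have "v + v' = fst (lc (\<lambda>j. c j + c' j)) i" unfolding v v' by (simp add: fst_lincomb_add)
  then show ?thesis unfolding v v' using vertex_map_lc[OF i] by (simp add: fun_eq_iff distrib_right)
qed

lemma vertex_map_scale:
  assumes i: "i < n" and "v \<in> V i"
  shows "vertex_map i (scale d v) = prod_scale d (vertex_map i v)"
proof -
  obtain c where v: "v = fst (lc c) i" using vertex_lc[OF i \<open>v \<in> V i\<close>] by blast
  have "scale d v = fst (lc (\<lambda>j. d * c j)) i" unfolding v by (simp add: fst_lincomb_mult)
  then show ?thesis unfolding v using vertex_map_lc[OF i] by (simp add: fun_eq_iff)
qed

lemma vertex_map_edge:
  assumes i: "i < n" and e: "(v, \<beta>, w) \<in> E i"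
  shows "(vertex_map i v, \<beta>, vertex_map (Suc i mod n) w) \<in> PE i"
proof -
  obtain y where y: "y \<in> cycles n E" "(fst y i, snd y i, fst y (Suc i mod n)) = (v, \<beta>, w)"
    using reduced i e unfolding is_reduced_def by fastforce
  then obtain c where c: "y = lc c" using product_basis_generates[OF basis] by blast
  have si: "Suc i mod n < n" using i by simp
  define g where "g k = c k * \<alpha> k i" for k
  have \<beta>: "\<beta> = (\<Sum>k<r. g k)" using y(2) unfolding c g_def by (simp add: snd_lincomb)
  have edges: "(c k * u k i, g k, c k * u k (Suc i mod n)) \<in> elemE n (\<alpha> k) (a k) (l k) i" for k
    unfolding g_def elemE_def by auto
  have fv: "vertex_map i v = (\<lambda>k. if k < r then c k * u k i else 0)"
    using vertex_map_lc[OF i, of c] y(2) unfolding c by auto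
  have fw: "vertex_map (Suc i mod n) w = (\<lambda>k. if k < r then c k * u k (Suc i mod n) else 0)"
    using vertex_map_lc[OF si, of c] y(2) unfolding c by auto
  show ?thesis
    unfolding prodE_def mem_Collect_eq
    by (rule exI[of _ "vertex_map i v"], rule exI[of _ g], rule exI[of _ "vertex_map (Suc i mod n) w"])
      (use \<beta> edges fv fw in auto)
qed

lemma vertex_map_edge_rev:
  assumes i: "i < n" and v: "v \<in> V i" and w: "w \<in> V (Suc i mod n)"
    and e: "(vertex_map i v, \<beta>, vertex_map (Suc i mod n) w) \<in> PE i"
  shows "(v, \<beta>, w) \<in> E i"
proof -
  have si: "Suc i mod n < n" using i by simp
  obtain \<gamma> where edges: "\<forall>k<r. (vertex_map i v k, \<gamma> k, vertex_map (Suc i mod n) w k)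
        \<in> elemE n (\<alpha> k) (a k) (l k) i" and \<beta>: "\<beta> = (\<Sum>k<r. \<gamma> k)"
    using prodE_edgeD[OF e] by blast
  have "\<forall>k\<in>{..<r}. \<exists>d. vertex_map i v k = d * u k i \<and> \<gamma> k = d * \<alpha> k i
      \<and> vertex_map (Suc i mod n) w k = d * u k (Suc i mod n)"
    using edges unfolding elemE_def by auto
  then obtain D where D: "\<forall>k\<in>{..<r}. vertex_map i v k = D k * u k i \<and> \<gamma> k = D k * \<alpha> k i
      \<and> vertex_map (Suc i mod n) w k = D k * u k (Suc i mod n)"
    by (rule bchoice[elim_format]) blast
  have "vertex_map i (fst (lc D) i) = vertex_map i v"
    unfolding vertex_map_lc[OF i] using D by (auto simp: fun_eq_iff vertex_map_def)
  then have "fst (lc D) i = v"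
    using inj_onD[OF vertex_map_inj[OF i]] cycle_vertex[OF lc_in_cycles i] v by blast
  moreover have "vertex_map (Suc i mod n) (fst (lc D) (Suc i mod n)) = vertex_map (Suc i mod n) w"
    unfolding vertex_map_lc[OF si] using D by (auto simp: fun_eq_iff vertex_map_def)
  then have "fst (lc D) (Suc i mod n) = w"
    using inj_onD[OF vertex_map_inj[OF si]] cycle_vertex[OF lc_in_cycles si] w by blast
  moreover have "snd (lc D) i = \<beta>" unfolding \<beta> using D by (simp add: snd_lincomb)
  moreover have "(fst (lc D) i, snd (lc D) i, fst (lc D) (Suc i mod n)) \<in> E i"
    using lc_in_cycles[of D] i unfolding cycles_def by (auto simp: case_prod_beta)
  ultimately show ?thesis by simp
qed

lemma lin_iso_product: "lin_iso scale n V E prod_scale PV PE"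
  unfolding lin_iso_def
proof (intro exI[of _ vertex_map] allI impI conjI)
  fix i assume i: "i < n"
  show "bij_betw (vertex_map i) (V i) (PV i)"
    unfolding bij_betw_def using vertex_map_inj[OF i] vertex_map_in_prodV[OF i] vertex_map_surj[OF i]
    by blast
  show "\<forall>x\<in>V i. \<forall>y\<in>V i. vertex_map i (x + y) = vertex_map i x + vertex_map i y"
    using vertex_map_add[OF i] by blast
  show "\<forall>x\<in>V i. vertex_map i (scale c x) = (\<lambda>j. c * vertex_map i x j)" for c
    using vertex_map_scale[OF i] by blast
  show "\<forall>v\<in>V i. \<forall>\<beta>. \<forall>w\<in>V (Suc i mod n).
          (v, \<beta>, w) \<in> E i \<longleftrightarrow> (vertex_map i v, \<beta>, vertex_map (Suc i mod n) w) \<in> PE i"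
    using vertex_map_edge[OF i] vertex_map_edge_rev[OF i] by blast
qed

end

lemma (in elementary_product) lin_iso_of_factor_basis:
  assumes "linear_trellis scale n V E" "is_reduced n V E"
    and "product_basis scale n E r (\<lambda>j. (vs j, \<alpha> j))"
    and "\<forall>j<r. is_min_span n (vs j, \<alpha> j) (mkspan n (a j) (l j))"
  shows "lin_iso scale n V E prod_scale PV PE"
proof -
  interpret trellis_product_basis n r \<alpha> a l scale V E vs
    using assms elementary_product_axioms
    by (intro trellis_product_basis.intro trellis_product_basis_axioms.intro) auto
  show ?thesis by (rule lin_iso_product)
qed

theorem mainTheorem3:
  fixes scale :: "'f::{field,finite} \<Rightarrow> 'v::ab_group_add \<Rightarrow> 'v"
    and n r :: nat
    and V :: "nat \<Rightarrow> 'v set" and E :: "nat \<Rightarrow> ('v \<times> 'f \<times> 'v) set"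
    and \<alpha> :: "nat \<Rightarrow> nat \<Rightarrow> 'f" and a l :: "nat \<Rightarrow> nat"
  assumes "vector_space scale"
    and "1 \<le> n"
    and "is_linear_trellis scale n V E"
    and "is_reduced n V E"
    and "\<forall>j<r. a j < n \<and> l j \<le> n"
    and "\<forall>j<r. \<forall>i. n \<le> i \<longrightarrow> \<alpha> j i = 0"
    and "\<forall>j<r. \<forall>i<n. \<alpha> j i \<noteq> 0 \<longrightarrow> i \<in> closedint n (a j) (l j)"
    and "\<forall>j<r. \<forall>k<r. j \<noteq> k \<longrightarrow> \<not> (l j = 0 \<and> l k = 0 \<and> a j = a k)"
    and "\<forall>j<r. l j = 0 \<longrightarrow> \<alpha> j \<noteq> (\<lambda>_. 0)"
  shows "lin_iso scale n V E (\<lambda>c v j. c * v j)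
            (prodV r (\<lambda>j. elemV n (a j) (l j))) (prodE r (\<lambda>j. elemE n (\<alpha> j) (a j) (l j)))
         \<longleftrightarrow> (\<exists>vs :: nat \<Rightarrow> nat \<Rightarrow> 'v.
               product_basis scale n E r (\<lambda>j. (vs j, \<alpha> j))
             \<and> (\<forall>j<r. is_min_span n (vs j, \<alpha> j) (mkspan n (a j) (l j))))"
proof -
  interpret elementary_product n r \<alpha> a l
    using assms(2,5-9) by unfold_locales (auto, metis less_irrefl_nat)
  have "linear_trellis scale n V E"
    using assms(1,3) by (intro linear_trellis.intro linear_trellis_axioms.intro)
  then show ?thesis
    using factor_basis_of_lin_iso lin_iso_of_factor_basis assms(4) by blast
qed

end
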